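(* Let $D\in\{D_1,D_2,\dots,D_8\}$. For every positive integer $v$ with $v\equiv 0\pmod{14}$, there exists a $D$-decomposition of $K^*_v$.
   Context: $K^*_v$ denotes the complete symmetric digraph of order $v$: it contains both arcs $(x,y)$ and $(y,x)$ for every pair of distinct vertices $x,y$. A $D$-decomposition of a digraph $K$ is a set of subdigraphs of $K$, each isomorphic to $D$, such that every arc of $K$ lies in exactly one of them. For distinct vertices $v_0,\dots,v_6$, the digraphs $D_i[v_0,v_1,\dots,v_6]$ ($i\in[1,8]$) all have vertex set $\{v_0,\dots,v_6\}$ and the following arc sets: $D_1$: $(v_1,v_0),(v_1,v_2),(v_2,v_3),(v_3,v_4),(v_4,v_5),(v_5,v_6),(v_6,v_0)$; $D_2$: $(v_1,v_0),(v_2,v_1),(v_2,v_3),(v_3,v_4),(v_4,v_5),(v_5,v_6),(v_6,v_0)$; $D_3$: $(v_1,v_0),(v_1,v_2),(v_3,v_2),(v_3,v_4),(v_4,v_5),(v_5,v_6),(v_6,v_0)$; $D_4$: $(v_1,v_0),(v_1,v_2),(v_2,v_3),(v_4,v_3),(v_4,v_5),(v_5,v_6),(v_6,v_0)$; $D_5$: $(v_1,v_0),(v_2,v_1),(v_3,v_2),(v_3,v_4),(v_4,v_5),(v_5,v_6),(v_6,v_0)$; $D_6$: $(v_1,v_0),(v_2,v_1),(v_2,v_3),(v_3,v_4),(v_5,v_4),(v_5,v_6),(v_6,v_0)$; $D_7$: $(v_1,v_0),(v_1,v_2),(v_3,v_2),(v_3,v_4),(v_4,v_5),(v_6,v_5),(v_6,v_0)$;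 $D_8$: $(v_1,v_0),(v_2,v_1),(v_2,v_3),(v_4,v_3),(v_4,v_5),(v_5,v_6),(v_6,v_0)$. $D_i$ also denotes the isomorphism type of $D_i[v_0,\dots,v_6]$. *)

theory Defs
  imports Main
begin

definition complete_sym_digraph :: "'a set \<Rightarrow> ('a \<times> 'a) set" where
  "complete_sym_digraph V = {(x, y). x \<in> V \<and> y \<in> V \<and> x \<noteq> y}"

text \<open>The digraphs D_1..D_8 as arc lists on the index set {0..6}
  (index j stands for vertex v_j).\<close>
fun D_pattern :: "nat \<Rightarrow> (nat \<times> nat) list" where
  "D_pattern (Suc 0) = [(1,0),(1,2),(2,3),(3,4),(4,5),(5,6),(6,0)]"
| "D_pattern (Suc (Suc 0)) = [(1,0),(2,1),(2,3),(3,4),(4,5),(5,6),(6,0)]"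
| "D_pattern (Suc (Suc (Suc 0))) = [(1,0),(1,2),(3,2),(3,4),(4,5),(5,6),(6,0)]"
| "D_pattern (Suc (Suc (Suc (Suc 0)))) = [(1,0),(1,2),(2,3),(4,3),(4,5),(5,6),(6,0)]"
| "D_pattern (Suc (Suc (Suc (Suc (Suc 0))))) = [(1,0),(2,1),(3,2),(3,4),(4,5),(5,6),(6,0)]"
| "D_pattern (Suc (Suc (Suc (Suc (Suc (Suc 0)))))) = [(1,0),(2,1),(2,3),(3,4),(5,4),(5,6),(6,0)]"
| "D_pattern (Suc (Suc (Suc (Suc (Suc (Suc (Suc 0))))))) = [(1,0),(1,2),(3,2),(3,4),(4,5),(6,5),(6,0)]"
| "D_pattern (Suc (Suc (Suc (Suc (Suc (Suc (Suc (Suc 0)))))))) = [(1,0),(2,1),(2,3),(4,3),(4,5),(5,6),(6,0)]"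
| "D_pattern _ = []"

definition D_copy :: "nat \<Rightarrow> (nat \<Rightarrow> 'a) \<Rightarrow> ('a \<times> 'a) set" where
  "D_copy i f = (\<lambda>(a, b). (f a, f b)) ` set (D_pattern i)"

text \<open>A subdigraph of K*_V isomorphic to D_i, given by its arc set (D_i has no
  isolated vertices, so the arc set determines the subdigraph): the image of
  D_i under an injective labelling of v_0..v_6 by distinct vertices of V.\<close>
definition is_D_copy_in :: "nat \<Rightarrow> 'a set \<Rightarrow> ('a \<times> 'a) set \<Rightarrow> bool" where
  "is_D_copy_in i V B \<longleftrightarrow>
     (\<exists>f. inj_on f {0..6::nat} \<and> f ` {0..6} \<subseteq> V \<and> B = D_copy i f)"

definition is_D_decomposition :: "nat \<Rightarrow> 'a set \<Rightarrow> ('a \<times> 'a) set set \<Rightarrow> bool" where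
  "is_D_decomposition i V \<D> \<longleftrightarrow>
     (\<forall>B\<in>\<D>. is_D_copy_in i V B) \<and>
     (\<forall>e\<in>complete_sym_digraph V. \<exists>!B. B \<in> \<D> \<and> e \<in> B) \<and>
     \<Union>\<D> \<subseteq> complete_sym_digraph V"

end

theory Submission
  imports Defs
begin

text \<open>
  Write \<open>v = n + 1\<close> with \<open>n = 14T + 13\<close> and take the vertex set \<open>\<int>\<^sub>n \<union> {\<infinity>}\<close>.
  Suppose we are given copies of \<open>D\<^sub>i\<close> with vertices in \<open>\<int>\<^sub>n \<union> {\<infinity>}\<close> (base blocks),
  exactly one of which passes through \<open>\<infinity>\<close>, such that the differences \<open>y - x\<close> of the arcs
  \<open>(x, y)\<close> avoiding \<open>\<infinity>\<close> run through every nonzero residue modulo \<open>n\<close> exactly once.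
  Then the \<open>n\<close> translates of the base blocks decompose \<open>K\<^sup>*\<^sub>v\<close>: an arc \<open>(x, y)\<close> of
  \<open>\<int>\<^sub>n\<close> lies in exactly one translate of the unique base arc with difference \<open>y - x\<close>,
  and since \<open>\<infinity>\<close> has in- and out-degree one in its block, the arcs at \<open>\<infinity>\<close> are covered too.
  We use \<open>2T + 2\<close> base blocks: \<open>\<infinity>\<close>, \<open>X\<close>, and \<open>A\<^sub>k\<close>, \<open>B\<^sub>k\<close> for \<open>1 \<le> k \<le> T\<close>; their arcs
  realise the differences \<open>\<plusminus>1, \<dots>, \<plusminus>(7T + 6)\<close>, one for each nonzero residue.
\<close>

section \<open>Developing rotational base blocks\<close>

lemma D_pattern_arc: "(a, b) \<in> set (D_pattern i) \<Longrightarrow> a \<le> 6 \<and> b \<le> 6 \<and> a \<noteq> b"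
  by (induction i rule: D_pattern.induct) auto

lemma mem_D_copy: "e \<in> D_copy i f \<longleftrightarrow> (\<exists>(a, b)\<in>set (D_pattern i). e = (f a, f b))"
  unfolding D_copy_def by auto

definition avoiding_arcs :: "nat \<Rightarrow> nat \<Rightarrow> (nat \<times> nat) list" where
  "avoiding_arcs i m = filter (\<lambda>(a, b). a \<noteq> m \<and> b \<noteq> m) (D_pattern i)"

definition finite_arcs :: "nat \<Rightarrow> 'b set \<Rightarrow> 'b \<Rightarrow> nat \<Rightarrow> ('b \<times> nat \<times> nat) set" where
  "finite_arcs i I \<omega> m = (I - {\<omega>}) \<times> set (D_pattern i) \<union> {\<omega>} \<times> set (avoiding_arcs i m)"

fun arc_difference :: "('b \<Rightarrow> nat \<Rightarrow> int) \<Rightarrow> 'b \<times> nat \<times> nat \<Rightarrow> int" where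
  "arc_difference pos (\<beta>, a, b) = pos \<beta> b - pos \<beta> a"

text \<open>
  The vertex \<open>n\<close> plays the role of \<open>\<infinity>\<close> and \<open>{0..<n}\<close> that of \<open>\<int>\<^sub>n\<close>. The base block
  \<open>\<beta> \<in> I\<close> puts \<open>v\<^sub>j\<close> at the residue of \<open>pos \<beta> j\<close>, except that in the block \<open>\<omega>\<close> the
  vertex \<open>v\<^sub>m\<close> is \<open>\<infinity>\<close> (so \<open>pos \<omega> m\<close> is irrelevant); \<open>label \<beta> s\<close> is its translate by \<open>s\<close>.
\<close>

locale rotational_base_blocks =
  fixes i n :: nat and I :: "'b set" and \<omega> :: 'b and m :: nat and pos :: "'b \<Rightarrow> nat \<Rightarrow> int"
  assumes n_pos: "n \<ge> 1"
    and \<omega>_block: "\<omega> \<in> I"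
    and m_out: "\<exists>!b. (m, b) \<in> set (D_pattern i)"
    and m_in: "\<exists>!a. (a, m) \<in> set (D_pattern i)"
    and pos_inj: "\<And>\<beta>. \<beta> \<in> I \<Longrightarrow> \<beta> \<noteq> \<omega> \<Longrightarrow> inj_on (\<lambda>j. pos \<beta> j mod int n) {0..6}"
    and pos_inj_\<omega>: "inj_on (\<lambda>j. pos \<omega> j mod int n) ({0..6} - {m})"
    and differences_bij:
      "bij_betw (\<lambda>z. arc_difference pos z mod int n) (finite_arcs i I \<omega> m) {1..<int n}"
begin

definition label :: "'b \<Rightarrow> nat \<Rightarrow> nat \<Rightarrow> nat" where
  "label \<beta> s j = (if \<beta> = \<omega> \<and> j = m then n else nat ((pos \<beta> j + int s) mod int n))"

definition development :: "(nat \<times> nat) set set" where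
  "development = (\<lambda>(\<beta>, s). D_copy i (label \<beta> s)) ` (I \<times> {..<n})"

lemma label_finite: "\<beta> \<noteq> \<omega> \<or> j \<noteq> m \<Longrightarrow> int (label \<beta> s j) = (pos \<beta> j + int s) mod int n"
  using n_pos unfolding label_def by auto

lemma label_lt: "\<beta> \<noteq> \<omega> \<or> j \<noteq> m \<Longrightarrow> label \<beta> s j < n"
proof -
  assume "\<beta> \<noteq> \<omega> \<or> j \<noteq> m"
  then have "int (label \<beta> s j) < int n" using label_finite n_pos by simp
  then show ?thesis by simp
qed

lemma label_eq_n: "label \<beta> s j = n \<longleftrightarrow> \<beta> = \<omega> \<and> j = m"
  using label_lt[of \<beta> j s] by (auto simp: label_def)

lemma label_le: "label \<beta> s j \<le> n"
  using label_lt label_eq_n by (metis le_less)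

lemma label_shift_inj:
  assumes "\<beta> \<noteq> \<omega> \<or> j \<noteq> m" "label \<beta> s j = label \<beta> s' j" "s < n" "s' < n"
  shows "s = s'"
proof -
  have "(int s + pos \<beta> j) mod int n = (int s' + pos \<beta> j) mod int n"
    using assms(2) label_finite[OF assms(1)] by (metis add.commute)
  then have "int s mod int n = int s' mod int n" by (simp add: mod_eq_dvd_iff)
  with assms(3,4) show ?thesis by (simp add: zmod_int)
qed

lemma label_shift_surj:
  assumes "\<beta> \<noteq> \<omega> \<or> j \<noteq> m" "x < n"
  obtains s where "s < n" "label \<beta> s j = x"
proof
  let ?s = "nat ((int x - pos \<beta> j) mod int n)"
  show "?s < n" using n_pos by (simp add: nat_less_iff)
  have "int (label \<beta> ?s j) = (pos \<beta> j + (int x - pos \<beta> j) mod int n) mod int n"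
    using label_finite[OF assms(1)] n_pos by simp
  also have "\<dots> = int x" using assms(2) by (simp add: mod_add_right_eq)
  finally show "label \<beta> ?s j = x" by simp
qed

lemma label_inj: "\<beta> \<in> I \<Longrightarrow> inj_on (label \<beta> s) {0..6}"
proof (rule inj_onI)
  fix j j' assume \<beta>: "\<beta> \<in> I" and j: "j \<in> {0..6}" "j' \<in> {0..6}" and eq: "label \<beta> s j = label \<beta> s j'"
  show "j = j'"
  proof (cases "\<beta> = \<omega> \<and> (j = m \<or> j' = m)")
    case True
    then show ?thesis using eq label_eq_n by metis
  next
    case False
    then have "(pos \<beta> j + int s) mod int n = (pos \<beta> j' + int s) mod int n"
      using eq label_finite by metis
    then have "pos \<beta> j mod int n = pos \<beta> j' mod int n" by (simp add: mod_eq_dvd_iff)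
    then show ?thesis
      using False j pos_inj[OF \<beta>] pos_inj_\<omega> by (cases "\<beta> = \<omega>") (auto dest: inj_onD)
  qed
qed

lemma label_difference:
  assumes "\<beta> \<noteq> \<omega> \<or> a \<noteq> m" "\<beta> \<noteq> \<omega> \<or> b \<noteq> m"
  shows "(int (label \<beta> s b) - int (label \<beta> s a)) mod int n = (pos \<beta> b - pos \<beta> a) mod int n"
  unfolding label_finite[OF assms(1)] label_finite[OF assms(2)]
  by (simp add: mod_diff_eq)

lemma development_finite_arc_exists:
  assumes "x < n" "y < n" "x \<noteq> y"
  obtains \<beta> s a b where "\<beta> \<in> I" "s < n" "(a, b) \<in> set (D_pattern i)"
    "x = label \<beta> s a" "y = label \<beta> s b"
proof -
  let ?d = "(int y - int x) mod int n"
  have "?d \<noteq> 0"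
  proof
    assume "?d = 0"
    then have "int y mod int n = int x mod int n" by (simp add: mod_eq_dvd_iff dvd_eq_mod_eq_0)
    with assms show False by (simp add: zmod_int)
  qed
  moreover have "?d \<ge> 0" "?d < int n" using n_pos by simp_all
  ultimately have "?d \<in> (\<lambda>z. arc_difference pos z mod int n) ` finite_arcs i I \<omega> m"
    using differences_bij by (simp add: bij_betw_def)
  then obtain \<beta> a b where "(\<beta>, a, b) \<in> finite_arcs i I \<omega> m"
    and d: "(pos \<beta> b - pos \<beta> a) mod int n = ?d"
    by fastforce
  then have \<beta>: "\<beta> \<in> I" "(a, b) \<in> set (D_pattern i)" "\<beta> \<noteq> \<omega> \<or> a \<noteq> m" "\<beta> \<noteq> \<omega> \<or> b \<noteq> m"
    using \<omega>_block by (auto simp: finite_arcs_def avoiding_arcs_def)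
  obtain s where s: "s < n" "label \<beta> s a = x" using label_shift_surj[OF \<beta>(3) assms(1)] by metis
  have "(int (label \<beta> s b) - int x) mod int n = (int y - int x) mod int n"
    using label_difference[OF \<beta>(3,4), of s] s(2) d by simp
  then have "int (label \<beta> s b) mod int n = int y mod int n" by (simp add: mod_eq_dvd_iff)
  then have "label \<beta> s b = y" using label_lt[OF \<beta>(4)] assms(2) by (simp add: zmod_int)
  then show ?thesis using that \<beta> s by blast
qed

lemma development_arc_exists:
  assumes "(x, y) \<in> complete_sym_digraph {0..<Suc n}"
  obtains \<beta> s a b where "\<beta> \<in> I" "s < n" "(a, b) \<in> set (D_pattern i)"
    "x = label \<beta> s a" "y = label \<beta> s b"
proof -
  have xy: "x \<le> n" "y \<le> n" "x \<noteq> y" using assms by (auto simp: complete_sym_digraph_def)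
  consider "x = n" | "y = n" | "x < n" "y < n" using xy by linarith
  then show ?thesis
  proof cases
    case 1
    obtain b where b: "(m, b) \<in> set (D_pattern i)" using m_out by blast
    have "b \<noteq> m" "y < n" using D_pattern_arc[OF b] xy 1 by auto
    then obtain s where "s < n" "label \<omega> s b = y" using label_shift_surj by metis
    moreover have "label \<omega> s m = n" using label_eq_n by simp
    ultimately show ?thesis using that[of \<omega> s m b] \<omega>_block b 1 by simp
  next
    case 2
    obtain a where a: "(a, m) \<in> set (D_pattern i)" using m_in by blast
    have "a \<noteq> m" "x < n" using D_pattern_arc[OF a] xy 2 by auto
    then obtain s where "s < n" "label \<omega> s a = x" using label_shift_surj by metis
    moreover have "label \<omega> s m = n" using label_eq_n by simp
    ultimately show ?thesis using that[of \<omega> s a m] \<omega>_block a 2 by simp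
  next
    case 3
    then show ?thesis using development_finite_arc_exists xy(3) that by metis
  qed
qed

lemma development_arc_unique:
  assumes "\<beta> \<in> I" "\<beta>' \<in> I" "s < n" "s' < n"
    and ab: "(a, b) \<in> set (D_pattern i)" and ab': "(a', b') \<in> set (D_pattern i)"
    and eq: "label \<beta> s a = label \<beta>' s' a'" "label \<beta> s b = label \<beta>' s' b'"
  shows "\<beta> = \<beta>' \<and> s = s'"
proof -
  consider "label \<beta> s a = n" | "label \<beta> s b = n" | "label \<beta> s a \<noteq> n" "label \<beta> s b \<noteq> n"
    by blast
  then show ?thesis
  proof cases
    case 1
    then have "\<beta> = \<omega>" "\<beta>' = \<omega>" "a = m" "a' = m" using eq label_eq_n by metis+
    then have "b = b'" using m_out ab ab' by blast
    moreover have "b \<noteq> m" using D_pattern_arc[OF ab] \<open>a = m\<close> by simp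
    ultimately show ?thesis
      using label_shift_inj[of \<beta> b s s'] eq(2) assms(3,4) \<open>\<beta> = \<omega>\<close> \<open>\<beta>' = \<omega>\<close> by simp
  next
    case 2
    then have "\<beta> = \<omega>" "\<beta>' = \<omega>" "b = m" "b' = m" using eq label_eq_n by metis+
    then have "a = a'" using m_in ab ab' by blast
    moreover have "a \<noteq> m" using D_pattern_arc[OF ab] \<open>b = m\<close> by simp
    ultimately show ?thesis
      using label_shift_inj[of \<beta> a s s'] eq(1) assms(3,4) \<open>\<beta> = \<omega>\<close> \<open>\<beta>' = \<omega>\<close> by simp
  next
    case 3
    then have fin: "\<beta> \<noteq> \<omega> \<or> a \<noteq> m" "\<beta> \<noteq> \<omega> \<or> b \<noteq> m" "\<beta>' \<noteq> \<omega> \<or> a' \<noteq> m" "\<beta>' \<noteq> \<omega> \<or> b' \<noteq> m"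
      using eq label_eq_n by metis+
    have arcs: "(\<beta>, a, b) \<in> finite_arcs i I \<omega> m" "(\<beta>', a', b') \<in> finite_arcs i I \<omega> m"
      using fin assms(1,2) ab ab' by (auto simp: finite_arcs_def avoiding_arcs_def)
    have "(pos \<beta> b - pos \<beta> a) mod int n = (pos \<beta>' b' - pos \<beta>' a') mod int n"
      using label_difference[OF fin(1,2), of s] label_difference[OF fin(3,4), of s'] eq by simp
    then have "(\<beta>, a, b) = (\<beta>', a', b')"
      using inj_onD[OF bij_betw_imp_inj_on[OF differences_bij] _ arcs] by simp
    then show ?thesis using label_shift_inj[OF fin(1)] eq(1) assms(3,4) by auto
  qed
qed

theorem development_decomposition: "is_D_decomposition i {0..<Suc n} development"
  unfolding is_D_decomposition_def
proof (intro conjI ballI)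
  fix B assume "B \<in> development"
  then obtain \<beta> s where "\<beta> \<in> I" "B = D_copy i (label \<beta> s)" by (auto simp: development_def)
  then show "is_D_copy_in i {0..<Suc n} B"
    unfolding is_D_copy_in_def using label_inj label_le by (fastforce simp: less_Suc_eq_le)
next
  show "\<Union> development \<subseteq> complete_sym_digraph {0..<Suc n}"
  proof
    fix e assume "e \<in> \<Union> development"
    then obtain \<beta> s a b where \<beta>: "\<beta> \<in> I" and ab: "(a, b) \<in> set (D_pattern i)"
      and e: "e = (label \<beta> s a, label \<beta> s b)"
      by (auto simp: development_def mem_D_copy)
    have "label \<beta> s a \<noteq> label \<beta> s b"
      using inj_onD[OF label_inj[OF \<beta>]] D_pattern_arc[OF ab] by fastforce
    then show "e \<in> complete_sym_digraph {0..<Suc n}"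
      using e label_le by (auto simp: complete_sym_digraph_def less_Suc_eq_le)
  qed
next
  fix e assume e: "e \<in> complete_sym_digraph {0..<Suc n}"
  obtain x y where xy: "e = (x, y)" by fastforce
  obtain \<beta> s a b where copy: "\<beta> \<in> I" "s < n" "(a, b) \<in> set (D_pattern i)"
    "x = label \<beta> s a" "y = label \<beta> s b"
    using development_arc_exists e xy by metis
  show "\<exists>!B. B \<in> development \<and> e \<in> B"
  proof (rule ex1I)
    show "D_copy i (label \<beta> s) \<in> development \<and> e \<in> D_copy i (label \<beta> s)"
      using copy xy by (force simp: development_def mem_D_copy)
  next
    fix B assume "B \<in> development \<and> e \<in> B"
    then obtain \<beta>' s' a' b' where "\<beta>' \<in> I" "s' < n" "(a', b') \<in> set (D_pattern i)"
      "B = D_copy i (label \<beta>' s')" "x = label \<beta>' s' a'" "y = label \<beta>' s' b'"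
      using xy by (auto simp: development_def mem_D_copy)
    then show "B = D_copy i (label \<beta> s)"
      using development_arc_unique[of \<beta> \<beta>' s s' a b a' b'] copy by auto
  qed
qed

end

section \<open>Residues given by small representatives\<close>

lemma mod_eq_imp_eq_of_abs_diff_less:
  fixes x y N :: int
  assumes "x mod N = y mod N" "\<bar>x - y\<bar> < N"
  shows "x = y"
proof (rule ccontr)
  assume "x \<noteq> y"
  moreover have "N dvd x - y" using assms(1) by (simp add: mod_eq_dvd_iff)
  ultimately have "\<bar>N\<bar> \<le> \<bar>x - y\<bar>" by (simp add: dvd_imp_le_int)
  with assms(2) show False by linarith
qed

lemma inj_on_mod_of_abs_diff_less:
  fixes p :: "'a \<Rightarrow> int"
  assumes "\<forall>j\<in>S. \<forall>j'\<in>S. j \<noteq> j' \<longrightarrow> p j \<noteq> p j' \<and> \<bar>p j - p j'\<bar> < N"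
  shows "inj_on (\<lambda>j. p j mod N) S"
  using assms mod_eq_imp_eq_of_abs_diff_less by (intro inj_onI) blast

lemma bij_betw_mod_of_representatives:
  fixes f r :: "'a \<Rightarrow> int" and n :: nat
  assumes "finite A" "card A = n - 1" "inj_on r A"
    and small: "\<And>z. z \<in> A \<Longrightarrow> r z \<noteq> 0 \<and> 2 * \<bar>r z\<bar> < int n"
    and congruent: "\<And>z. z \<in> A \<Longrightarrow> f z mod int n = r z mod int n"
  shows "bij_betw (\<lambda>z. f z mod int n) A {1..<int n}"
proof -
  have inj: "inj_on (\<lambda>z. f z mod int n) A"
  proof (rule inj_onI)
    fix z w assume "z \<in> A" "w \<in> A" "f z mod int n = f w mod int n"
    then have "r z mod int n = r w mod int n" using congruent by simp
    moreover have "\<bar>r z - r w\<bar> < int n" using small[OF \<open>z \<in> A\<close>] small[OF \<open>w \<in> A\<close>] by arith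
    ultimately have "r z = r w" by (rule mod_eq_imp_eq_of_abs_diff_less)
    then show "z = w" using \<open>inj_on r A\<close> \<open>z \<in> A\<close> \<open>w \<in> A\<close> by (auto dest: inj_onD)
  qed
  have "f z mod int n \<in> {1..<int n}" if "z \<in> A" for z
  proof -
    have "r z mod int n \<noteq> 0"
      using small[OF that] mod_eq_imp_eq_of_abs_diff_less[of "r z" "int n" 0] by auto
    moreover have "int n > 0" using small[OF that] by linarith
    moreover have "r z mod int n \<ge> 0" using \<open>int n > 0\<close> by simp
    ultimately have "r z mod int n \<ge> 1" by linarith
    then show ?thesis using congruent[OF that] \<open>int n > 0\<close> by simp
  qed
  moreover have "card ((\<lambda>z. f z mod int n) ` A) = card {1..<int n}"
    using card_image[OF inj] assms(2) by simp
  ultimately have "(\<lambda>z. f z mod int n) ` A = {1..<int n}"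
    by (intro card_subset_eq) (simp_all add: image_subset_iff)
  with inj show ?thesis by (simp add: bij_betw_def)
qed

lemma mod_eq_if_diff_multiple: "x - y \<in> {0, N, - N} \<Longrightarrow> (x::int) mod N = y mod N"
  by (auto simp: mod_eq_dvd_iff)

section \<open>Base blocks modulo \<open>14T + 13\<close>\<close>

datatype block = Inf_block | X_block | A_block nat | B_block nat

definition blocks :: "nat \<Rightarrow> block set" where
  "blocks T = {Inf_block, X_block} \<union> A_block ` {1..T} \<union> B_block ` {1..T}"

datatype difference_class = X_differences | Inf_differences | Pair_differences nat

fun class_of :: "block \<Rightarrow> difference_class" where
  "class_of Inf_block = Inf_differences"
| "class_of X_block = X_differences"
| "class_of (A_block k) = Pair_differences k"
| "class_of (B_block k) = Pair_differences k"

text \<open>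
  Up to sign the lists below contain each of \<open>1, \<dots>, 7T + 6\<close> exactly once, so they form a
  system of representatives of the nonzero residues modulo \<open>14T + 13\<close>.
\<close>

definition differences :: "nat \<Rightarrow> difference_class \<Rightarrow> int list" where
  "differences T c = (case c of
      X_differences \<Rightarrow> [1, -1, -2, 3, -3, 4, -4]
    | Inf_differences \<Rightarrow> [2, 7 * int T + 5, - 7 * int T - 5, 7 * int T + 6, - 7 * int T - 6]
    | Pair_differences k \<Rightarrow>
        [2 * int T + 5 - 2 * int k, - 2 * int k - 3, 2 * int k + 4, 2 * int k - 2 * int T - 6,
         int k + 2 * int T + 4, - int k - 2 * int T - 4, int k + 3 * int T + 4, - int k - 3 * int T - 4,
         int k + 4 * int T + 4, - int k - 4 * int T - 4, int k + 5 * int T + 4, - int k - 5 * int T - 4,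
         int k + 6 * int T + 4, - int k - 6 * int T - 4])"

definition difference_slots :: "nat \<Rightarrow> (difference_class \<times> nat) set" where
  "difference_slots T = {X_differences} \<times> {..<7} \<union> {Inf_differences} \<times> {..<5}
     \<union> Pair_differences ` {1..T} \<times> {..<14}"

lemma less_14_cases:
  "(t::nat) < 14 \<longleftrightarrow> t = 0 \<or> t = 1 \<or> t = 2 \<or> t = 3 \<or> t = 4 \<or> t = 5 \<or> t = 6 \<or> t = 7 \<or> t = 8
     \<or> t = 9 \<or> t = 10 \<or> t = 11 \<or> t = 12 \<or> t = 13"
  by presburger

lemma less_7_cases: "(t::nat) < 7 \<longleftrightarrow> t = 0 \<or> t = 1 \<or> t = 2 \<or> t = 3 \<or> t = 4 \<or> t = 5 \<or> t = 6"
  by presburger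

lemma less_5_cases: "(t::nat) < 5 \<longleftrightarrow> t = 0 \<or> t = 1 \<or> t = 2 \<or> t = 3 \<or> t = 4"
  by presburger

lemma X_differences_bound:
  "t < 7 \<Longrightarrow> differences T X_differences ! t \<noteq> 2
    \<and> 1 \<le> \<bar>differences T X_differences ! t\<bar> \<and> \<bar>differences T X_differences ! t\<bar> \<le> 4"
  unfolding less_7_cases differences_def by auto

lemma Inf_differences_bound:
  "t < 5 \<Longrightarrow> differences T Inf_differences ! t = 2
    \<or> 7 * int T + 5 \<le> \<bar>differences T Inf_differences ! t\<bar>
      \<and> \<bar>differences T Inf_differences ! t\<bar> \<le> 7 * int T + 6"
  unfolding less_5_cases differences_def by auto

lemma Pair_differences_bound:
  "k \<in> {1..T} \<Longrightarrow> t < 14 \<Longrightarrow> 5 \<le> \<bar>differences T (Pair_differences k) ! t\<bar>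
    \<and> \<bar>differences T (Pair_differences k) ! t\<bar> \<le> 7 * int T + 4"
  unfolding atLeastAtMost_iff less_14_cases differences_def by (elim conjE disjE) auto

lemma Pair_differences_eq:
  assumes "k \<in> {1..T}" "k' \<in> {1..T}" "t < 14" "t' < 14"
    and "differences T (Pair_differences k) ! t = differences T (Pair_differences k') ! t'"
  shows "k = k' \<and> t = t'"
  using assms unfolding atLeastAtMost_iff less_14_cases differences_def
  by (elim conjE disjE; simp; (linarith | presburger)?)

lemma differences_range:
  assumes "(c, t) \<in> difference_slots T"
  defines "d \<equiv> differences T c ! t"
  shows "(1 \<le> \<bar>d\<bar> \<and> \<bar>d\<bar> \<le> 7 * int T + 6)
    \<and> (c = X_differences \<longleftrightarrow> \<bar>d\<bar> \<le> 4 \<and> d \<noteq> 2)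
    \<and> (c = Inf_differences \<longleftrightarrow> d = 2 \<or> 7 * int T + 4 < \<bar>d\<bar>)"
proof (cases c)
  case X_differences
  then show ?thesis using assms X_differences_bound[of t T] by (auto simp: difference_slots_def)
next
  case Inf_differences
  then show ?thesis using assms Inf_differences_bound[of t T] by (auto simp: difference_slots_def)
next
  case (Pair_differences k)
  then show ?thesis using assms Pair_differences_bound[of k T t] by (auto simp: difference_slots_def)
qed

lemma differences_inj: "inj_on (\<lambda>(c, t). differences T c ! t) (difference_slots T)"
proof (rule inj_onI, clarify)
  fix c t c' t'
  assume slots: "(c, t) \<in> difference_slots T" "(c', t') \<in> difference_slots T"
    and eq: "differences T c ! t = differences T c' ! t'"
  have same_kind: "c = X_differences \<longleftrightarrow> c' = X_differences" "c = Inf_differences \<longleftrightarrow> c' = Inf_differences"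
    using differences_range[OF slots(1)] differences_range[OF slots(2)] eq by simp_all
  show "c = c' \<and> t = t'"
  proof (cases c)
    case X_differences
    then show ?thesis
      using same_kind slots eq by (auto simp: difference_slots_def less_7_cases differences_def)
  next
    case Inf_differences
    then show ?thesis
      using same_kind slots eq by (auto simp: difference_slots_def less_5_cases differences_def)
  next
    case (Pair_differences k)
    moreover from this obtain k' where "c' = Pair_differences k'"
      using same_kind by (cases c') auto
    ultimately show ?thesis
      using slots eq Pair_differences_eq[of k T k' t t'] by (auto simp: difference_slots_def)
  qed
qed

text \<open>
  Each \<open>D\<^sub>i\<close> orients the cycle \<open>v\<^sub>0 v\<^sub>1 \<dots> v\<^sub>6 v\<^sub>0\<close>, and \<open>D_pattern i\<close> lists its arcs in
  cycle order; \<open>cycle_edge (a, b)\<close> is the position of the arc joining \<open>v\<^sub>a\<close> and \<open>v\<^sub>b\<close>.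
\<close>

definition cycle_edge :: "nat \<times> nat \<Rightarrow> nat" where
  "cycle_edge e = (if e = (6, 0) \<or> e = (0, 6) then 6 else min (fst e) (snd e))"

lemma cycle_edge_inj: "inj_on cycle_edge (set (D_pattern i))"
  by (induction i rule: D_pattern.induct) (auto simp: inj_on_def cycle_edge_def)

lemma cycle_edge_lt: "e \<in> set (D_pattern i) \<Longrightarrow> cycle_edge e < 7"
  by (induction i rule: D_pattern.induct) (auto simp: cycle_edge_def)

text \<open>
  A slot table \<open>slot\<close> declares that the arc \<open>e\<close> of block \<open>\<beta>\<close> realises the difference
  \<open>differences T (class_of \<beta>) ! (slot \<beta> ! cycle_edge e)\<close>.
\<close>

definition valid_slots :: "nat \<Rightarrow> nat \<Rightarrow> (block \<Rightarrow> nat list) \<Rightarrow> bool" where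
  "valid_slots i m slot \<longleftrightarrow>
     (\<forall>\<beta>. length (slot \<beta>) = 7)
     \<and> (\<forall>k. distinct (slot (A_block k) @ slot (B_block k))
            \<and> set (slot (A_block k) @ slot (B_block k)) \<subseteq> {..<14})
     \<and> distinct (slot X_block) \<and> set (slot X_block) \<subseteq> {..<7}
     \<and> distinct (map (\<lambda>e. slot Inf_block ! cycle_edge e) (avoiding_arcs i m))
     \<and> set (map (\<lambda>e. slot Inf_block ! cycle_edge e) (avoiding_arcs i m)) \<subseteq> {..<5}"

fun difference_slot :: "(block \<Rightarrow> nat list) \<Rightarrow> block \<times> nat \<times> nat \<Rightarrow> difference_class \<times> nat" where
  "difference_slot slot (\<beta>, e) = (class_of \<beta>, slot \<beta> ! cycle_edge e)"

lemma nth_append_distinct_neq: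
  "distinct (xs @ ys) \<Longrightarrow> j < length xs \<Longrightarrow> j' < length ys \<Longrightarrow> xs ! j \<noteq> ys ! j'"
  by (auto dest: nth_mem)

lemma class_of_eq_cases:
  assumes "class_of \<beta> = class_of \<beta>'"
  obtains "\<beta> = \<beta>'" | k where "\<beta> = A_block k" "\<beta>' = B_block k" | k where "\<beta> = B_block k" "\<beta>' = A_block k"
  using assms by (cases \<beta>; cases \<beta>') auto

lemma difference_slot_mem:
  assumes "valid_slots i m slot" "z \<in> finite_arcs i (blocks T) Inf_block m"
  shows "difference_slot slot z \<in> difference_slots T"
proof -
  obtain \<beta> a b where z: "z = (\<beta>, a, b)" by (metis prod.exhaust)
  have "(a, b) \<in> set (D_pattern i)"
    using assms(2) z by (auto simp: finite_arcs_def avoiding_arcs_def)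
  then have mem: "slot \<beta> ! cycle_edge (a, b) \<in> set (slot \<beta>)"
    using cycle_edge_lt assms(1) by (simp add: valid_slots_def)
  show ?thesis
  proof (cases \<beta>)
    case Inf_block
    then have "(a, b) \<in> set (avoiding_arcs i m)" using assms(2) z by (auto simp: finite_arcs_def)
    then show ?thesis using assms(1) z Inf_block by (auto simp: valid_slots_def difference_slots_def)
  next
    case X_block
    then show ?thesis using assms(1) mem z by (auto simp: valid_slots_def difference_slots_def)
  next
    case (A_block k)
    then have "k \<in> {1..T}" using assms(2) z by (auto simp: finite_arcs_def blocks_def)
    then show ?thesis
      using assms(1) mem z A_block by (fastforce simp: valid_slots_def difference_slots_def)
  next
    case (B_block k)
    then have "k \<in> {1..T}" using assms(2) z by (auto simp: finite_arcs_def blocks_def)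
    then show ?thesis
      using assms(1) mem z B_block by (fastforce simp: valid_slots_def difference_slots_def)
  qed
qed

lemma difference_slot_inj:
  assumes "valid_slots i m slot"
  shows "inj_on (difference_slot slot) (finite_arcs i (blocks T) Inf_block m)"
proof (rule inj_onI)
  fix z z'
  assume arcs: "z \<in> finite_arcs i (blocks T) Inf_block m" "z' \<in> finite_arcs i (blocks T) Inf_block m"
    and eq: "difference_slot slot z = difference_slot slot z'"
  obtain \<beta> a b \<beta>' a' b' where z: "z = (\<beta>, a, b)" "z' = (\<beta>', a', b')" by (metis prod.exhaust)
  have edges: "(a, b) \<in> set (D_pattern i)" "(a', b') \<in> set (D_pattern i)"
    using arcs z by (auto simp: finite_arcs_def avoiding_arcs_def)
  have slot_eq: "slot \<beta> ! cycle_edge (a, b) = slot \<beta>' ! cycle_edge (a', b')"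
    using eq z by simp
  have length: "length (slot \<beta>'') = 7" for \<beta>''
    using assms by (simp add: valid_slots_def)
  have pair: "distinct (slot (A_block k) @ slot (B_block k))" for k
    using assms by (simp add: valid_slots_def)
  from eq z have "class_of \<beta> = class_of \<beta>'" by simp
  then have "\<beta> = \<beta>' \<and> (a, b) = (a', b')"
  proof (cases rule: class_of_eq_cases)
    case 1
    show ?thesis
    proof (cases "\<beta> = Inf_block")
      case True
      then have "(a, b) \<in> set (avoiding_arcs i m)" "(a', b') \<in> set (avoiding_arcs i m)"
        using arcs z 1 by (auto simp: finite_arcs_def)
      then show ?thesis
        using assms slot_eq True 1 by (auto simp: valid_slots_def distinct_map dest: inj_onD)
    next
      case False
      then have "distinct (slot \<beta>)" using assms by (cases \<beta>) (auto simp: valid_slots_def)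
      then have "cycle_edge (a, b) = cycle_edge (a', b')"
        using slot_eq length cycle_edge_lt[OF edges(1)] cycle_edge_lt[OF edges(2)] 1
        by (simp add: nth_eq_iff_index_eq)
      then show ?thesis using inj_onD[OF cycle_edge_inj _ edges] 1 by blast
    qed
  next
    case (2 k)
    then show ?thesis using slot_eq nth_append_distinct_neq[OF pair] length cycle_edge_lt edges by metis
  next
    case (3 k)
    then show ?thesis using slot_eq nth_append_distinct_neq[OF pair] length cycle_edge_lt edges by metis
  qed
  then show "z = z'" using z by simp
qed

lemma finite_blocks: "finite (blocks T)"
  by (simp add: blocks_def)

lemma card_blocks_Diff_Inf: "card (blocks T - {Inf_block}) = 2 * T + 1"
proof -
  have "blocks T - {Inf_block} = insert X_block (A_block ` {1..T} \<union> B_block ` {1..T})"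
    by (auto simp: blocks_def)
  moreover have "card (A_block ` {1..T} \<union> B_block ` {1..T}) = T + T"
    by (subst card_Un_disjoint) (auto simp: card_image inj_on_def)
  moreover have "X_block \<notin> A_block ` {1..T} \<union> B_block ` {1..T}" by auto
  ultimately show ?thesis by simp
qed

lemma card_finite_arcs:
  assumes "distinct (D_pattern i)" "length (D_pattern i) = 7" "length (avoiding_arcs i m) = 5"
  shows "card (finite_arcs i (blocks T) Inf_block m) = 14 * T + 12"
proof -
  have "distinct (avoiding_arcs i m)" using assms(1) by (simp add: avoiding_arcs_def)
  have "card (finite_arcs i (blocks T) Inf_block m)
      = card ((blocks T - {Inf_block}) \<times> set (D_pattern i)) + card ({Inf_block} \<times> set (avoiding_arcs i m))"
    unfolding finite_arcs_def by (rule card_Un_disjoint) (auto simp: finite_blocks)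
  also have "\<dots> = (2 * T + 1) * 7 + 5"
    using assms \<open>distinct (avoiding_arcs i m)\<close>
    by (simp add: card_cartesian_product card_blocks_Diff_Inf distinct_card)
  finally show ?thesis by simp
qed

lemma rotational_base_blocks_of_tables:
  fixes pos :: "block \<Rightarrow> nat \<Rightarrow> int"
  assumes m: "\<exists>!b. (m, b) \<in> set (D_pattern i)" "\<exists>!a. (a, m) \<in> set (D_pattern i)"
    and arcs: "distinct (D_pattern i)" "length (D_pattern i) = 7" "length (avoiding_arcs i m) = 5"
    and pos_inj: "\<And>\<beta>. \<beta> \<in> blocks T \<Longrightarrow> \<beta> \<noteq> Inf_block \<Longrightarrow>
        inj_on (\<lambda>j. pos \<beta> j mod (14 * int T + 13)) {0..6}"
      "inj_on (\<lambda>j. pos Inf_block j mod (14 * int T + 13)) ({0..6} - {m})"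
    and slots: "valid_slots i m slot"
    and congruent: "\<And>\<beta> a b. (\<beta>, a, b) \<in> finite_arcs i (blocks T) Inf_block m \<Longrightarrow>
      (pos \<beta> b - pos \<beta> a) mod (14 * int T + 13)
        = differences T (class_of \<beta>) ! (slot \<beta> ! cycle_edge (a, b)) mod (14 * int T + 13)"
  shows "rotational_base_blocks i (14 * T + 13) (blocks T) Inf_block m pos"
proof -
  let ?A = "finite_arcs i (blocks T) Inf_block m"
  let ?r = "\<lambda>z. (\<lambda>(c, t). differences T c ! t) (difference_slot slot z)"
  have "difference_slot slot ` ?A \<subseteq> difference_slots T"
    using difference_slot_mem[OF slots] by blast
  then have inj: "inj_on ?r ?A"
    using comp_inj_on[OF difference_slot_inj[OF slots, of T] inj_on_subset[OF differences_inj[of T]]]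
    by (simp add: comp_def)
  have small: "?r z \<noteq> 0 \<and> 2 * \<bar>?r z\<bar> < int (14 * T + 13)" if "z \<in> ?A" for z
  proof -
    obtain c t where ct: "difference_slot slot z = (c, t)" by fastforce
    then have "1 \<le> \<bar>differences T c ! t\<bar> \<and> \<bar>differences T c ! t\<bar> \<le> 7 * int T + 6"
      using differences_range difference_slot_mem[OF slots that] by simp
    then show ?thesis using ct by auto
  qed
  have "finite ?A" by (simp add: finite_arcs_def finite_blocks)
  moreover have "card ?A = 14 * T + 13 - 1" using card_finite_arcs[OF arcs] by simp
  ultimately have "bij_betw (\<lambda>z. arc_difference pos z mod int (14 * T + 13)) ?A {1..<int (14 * T + 13)}"
    using congruent by (intro bij_betw_mod_of_representatives[where r = ?r] inj small) auto
  then show ?thesis using m pos_inj by unfold_locales (auto simp: blocks_def)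
qed

section \<open>The base blocks for \<open>D\<^sub>1, \<dots>, D\<^sub>8\<close>\<close>

text \<open>
  In the \<open>\<infinity>\<close> block the position of \<open>v\<^bsub>inf_vertex i\<^esub>\<close>, which is \<open>\<infinity>\<close>, and the
  slots of the two edges through it are placeholders.
\<close>

definition positions_D1 :: "nat \<Rightarrow> block \<Rightarrow> nat \<Rightarrow> int" where
  "positions_D1 T \<beta> j = (case \<beta> of
      A_block k \<Rightarrow> [0, - int k - 3 * int T - 4, - 3 * int k - int T + 1, - 2 * int k + 5 * int T + 5,
                   - 3 * int k + 3 * int T + 1, - 2 * int k + 7 * int T + 5, - int k + 9 * int T + 9]
    | B_block k \<Rightarrow> [0, int k + 3 * int T + 4, - int k + 3 * int T + 1, int k + 3 * int T + 5,
                   - 2 * int T + 1, 2 * int k - 4 * int T - 5, int k - 8 * int T - 9]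
    | X_block \<Rightarrow> [0, 1, 2, 5, 3, 7, 4]
    | Inf_block \<Rightarrow> [- 7 * int T - 4, - 14 * int T - 10, 0, 0, 2, - 7 * int T - 3, - 14 * int T - 9]) ! j"

definition slots_D1 :: "block \<Rightarrow> nat list" where
  "slots_D1 \<beta> = (case \<beta> of
      A_block _ \<Rightarrow> [6, 0, 12, 5, 8, 4, 10] | B_block _ \<Rightarrow> [7, 1, 2, 11, 3, 9, 13]
    | X_block \<Rightarrow> [1, 0, 3, 2, 5, 4, 6] | Inf_block \<Rightarrow> [3, 0, 0, 0, 2, 4, 1])"

definition positions_D2 :: "nat \<Rightarrow> block \<Rightarrow> nat \<Rightarrow> int" where
  "positions_D2 T \<beta> j = (case \<beta> of
      A_block k \<Rightarrow> [0, - int k - 2 * int T - 4, int T, - 2 * int k + 3 * int T + 5,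
                   - int k + 6 * int T + 9, - 2 * int k + 4 * int T + 5, - int k + 8 * int T + 9]
    | B_block k \<Rightarrow> [0, - int k - 5 * int T - 4, - int T, - 2 * int k - int T - 3,
                   - 3 * int k - 7 * int T - 7, - int k - 7 * int T - 3, - 2 * int k - 12 * int T - 7]
    | X_block \<Rightarrow> [0, - 1, 1, 4, 8, 7, 3]
    | Inf_block \<Rightarrow> [2, 0, 0, 7 * int T + 5, 7 * int T + 7, 1, - 7 * int T - 4]) ! j"

definition slots_D2 :: "block \<Rightarrow> nat list" where
  "slots_D2 \<beta> = (case \<beta> of
      A_block _ \<Rightarrow> [4, 7, 0, 6, 5, 8, 12] | B_block _ \<Rightarrow> [10, 9, 1, 13, 2, 11, 3]
    | X_block \<Rightarrow> [0, 2, 3, 5, 1, 6, 4] | Inf_block \<Rightarrow> [0, 0, 1, 0, 4, 2, 3])"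

definition positions_D3 :: "nat \<Rightarrow> block \<Rightarrow> nat \<Rightarrow> int" where
  "positions_D3 T \<beta> j = (case \<beta> of
      A_block k \<Rightarrow> [0, - int k - 2 * int T - 4, - 3 * int k + 1, - 2 * int k + 3 * int T + 5,
                   - int k + 6 * int T + 9, - 2 * int k + 4 * int T + 5, - int k + 8 * int T + 9]
    | B_block k \<Rightarrow> [0, int k + 4 * int T + 4, 3 * int k + 2 * int T - 2, 2 * int k - 3 * int T - 6,
                   - 3 * int T - 9, 2 * int k - 3 * int T - 5, int k - 8 * int T - 9]
    | X_block \<Rightarrow> [0, - 1, 2, 4, 1, - 3, - 4]
    | Inf_block \<Rightarrow> [- 7 * int T - 3, - 14 * int T - 8, - 7 * int T - 2, 4, 0, 0, 2]) ! j"

definition slots_D3 :: "block \<Rightarrow> nat list" where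
  "slots_D3 \<beta> = (case \<beta> of
      A_block _ \<Rightarrow> [4, 0, 7, 6, 5, 8, 12] | B_block _ \<Rightarrow> [9, 3, 10, 1, 2, 11, 13]
    | X_block \<Rightarrow> [0, 3, 2, 4, 6, 1, 5] | Inf_block \<Rightarrow> [1, 3, 4, 0, 0, 0, 2])"

definition positions_D4 :: "nat \<Rightarrow> block \<Rightarrow> nat \<Rightarrow> int" where
  "positions_D4 T \<beta> j = (case \<beta> of
      A_block k \<Rightarrow> [0, - int k - 2 * int T - 4, - 3 * int k + 1, - 2 * int k + 3 * int T + 5,
                   - int k + 6 * int T + 9, - 2 * int k + 4 * int T + 5, - int k + 8 * int T + 9]
    | B_block k \<Rightarrow> [0, int k + 4 * int T + 4, 3 * int k + 2 * int T - 2, 2 * int k - 3 * int T - 6,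
                   int k - 8 * int T - 10, 3 * int k - 8 * int T - 6, int k - 8 * int T - 9]
    | X_block \<Rightarrow> [0, - 1, - 2, 1, 3, 7, 4]
    | Inf_block \<Rightarrow> [7 * int T + 4, 14 * int T + 10, 0, 0, - 2, 7 * int T + 3, 14 * int T + 9]) ! j"

definition slots_D4 :: "block \<Rightarrow> nat list" where
  "slots_D4 \<beta> = (case \<beta> of
      A_block _ \<Rightarrow> [4, 0, 6, 7, 5, 8, 12] | B_block _ \<Rightarrow> [9, 3, 11, 10, 2, 1, 13]
    | X_block \<Rightarrow> [0, 1, 3, 2, 5, 4, 6] | Inf_block \<Rightarrow> [4, 0, 0, 0, 1, 3, 2])"

definition positions_D5 :: "nat \<Rightarrow> block \<Rightarrow> nat \<Rightarrow> int" where
  "positions_D5 T \<beta> j = (case \<beta> of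
      A_block k \<Rightarrow> [0, - int k - 2 * int T - 4, int T, int k + 7 * int T + 4,
                   - int k + 9 * int T + 9, - 2 * int k + 7 * int T + 5, - int k + 10 * int T + 9]
    | B_block k \<Rightarrow> [0, - int k - 5 * int T - 4, - int T, - int k - 7 * int T - 4,
                   - 3 * int k - 7 * int T - 7, - int k - 7 * int T - 3, - 2 * int k - 12 * int T - 7]
    | X_block \<Rightarrow> [0, 2, 5, 1, 4, 3, - 1]
    | Inf_block \<Rightarrow> [- 14 * int T - 8, 0, 0, - 7 * int T - 5, - 7 * int T - 3, 3, - 7 * int T - 2]) ! j"

definition slots_D5 :: "block \<Rightarrow> nat list" where
  "slots_D5 \<beta> = (case \<beta> of
      A_block _ \<Rightarrow> [4, 7, 13, 0, 5, 6, 8] | B_block _ \<Rightarrow> [10, 9, 12, 1, 2, 11, 3]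
    | X_block \<Rightarrow> [2, 4, 5, 3, 1, 6, 0] | Inf_block \<Rightarrow> [0, 0, 1, 0, 3, 2, 4])"

definition positions_D6 :: "nat \<Rightarrow> block \<Rightarrow> nat \<Rightarrow> int" where
  "positions_D6 T \<beta> j = (case \<beta> of
      A_block k \<Rightarrow> [0, - int k - 2 * int T - 4, 4 * int T, - 2 * int k + 6 * int T + 5,
                   - 3 * int k + 4 * int T + 1, - 2 * int k + 7 * int T + 5, - int k + 10 * int T + 9]
    | B_block k \<Rightarrow> [0, int k + 4 * int T + 4, - 2 * int T, - 2 * int k - 2 * int T - 3,
                   - 2 * int T + 1, - int k - 7 * int T - 3, int k - 9 * int T - 9]
    | X_block \<Rightarrow> [0, 1, - 2, - 1, 3, 6, 4]
    | Inf_block \<Rightarrow> [- 14 * int T - 10, 0, 0, 2, - 7 * int T - 3, - 14 * int T - 9, - 7 * int T - 4]) ! j"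

definition slots_D6 :: "block \<Rightarrow> nat list" where
  "slots_D6 \<beta> = (case \<beta> of
      A_block _ \<Rightarrow> [4, 13, 0, 5, 7, 6, 8] | B_block _ \<Rightarrow> [9, 12, 1, 2, 10, 3, 11]
    | X_block \<Rightarrow> [1, 3, 0, 5, 4, 2, 6] | Inf_block \<Rightarrow> [0, 0, 0, 2, 3, 1, 4])"

definition positions_D7 :: "nat \<Rightarrow> block \<Rightarrow> nat \<Rightarrow> int" where
  "positions_D7 T \<beta> j = (case \<beta> of
      A_block k \<Rightarrow> [0, - int k - 2 * int T - 4, - 3 * int k + 1, - 2 * int k + 6 * int T + 5,
                   - 3 * int k + 4 * int T + 1, - 2 * int k + 7 * int T + 5, - int k + 10 * int T + 9]
    | B_block k \<Rightarrow> [0, int k + 4 * int T + 4, 3 * int k + 2 * int T - 2, 2 * int k - 3 * int T - 6,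
                   - 3 * int T - 9, 2 * int k - 3 * int T - 5, int k - 9 * int T - 9]
    | X_block \<Rightarrow> [0, 1, 2, - 1, - 3, - 7, - 4]
    | Inf_block \<Rightarrow> [7 * int T + 3, 14 * int T + 8, 7 * int T + 2, - 4, 0, 0, - 2]) ! j"

definition slots_D7 :: "block \<Rightarrow> nat list" where
  "slots_D7 \<beta> = (case \<beta> of
      A_block _ \<Rightarrow> [4, 0, 13, 5, 6, 7, 8] | B_block _ \<Rightarrow> [9, 3, 10, 1, 2, 12, 11]
    | X_block \<Rightarrow> [1, 0, 3, 2, 6, 4, 5] | Inf_block \<Rightarrow> [2, 4, 3, 0, 0, 0, 1])"

definition positions_D8 :: "nat \<Rightarrow> block \<Rightarrow> nat \<Rightarrow> int" where
  "positions_D8 T \<beta> j = (case \<beta> of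
      A_block k \<Rightarrow> [0, - int k - 2 * int T - 4, int T, - 2 * int k + 3 * int T + 5,
                   - int k + 9 * int T + 9, - 2 * int k + 7 * int T + 5, - int k + 10 * int T + 9]
    | B_block k \<Rightarrow> [0, - int k - 5 * int T - 4, - int T, - 2 * int k - int T - 3,
                   - 3 * int k - 7 * int T - 7, - int k - 7 * int T - 3, - 2 * int k - 12 * int T - 7]
    | X_block \<Rightarrow> [0, 1, - 2, - 1, 2, 6, 4]
    | Inf_block \<Rightarrow> [- 14 * int T - 8, 0, 0, 2, - 7 * int T - 3, 3, - 7 * int T - 2]) ! j"

definition slots_D8 :: "block \<Rightarrow> nat list" where
  "slots_D8 \<beta> = (case \<beta> of
      A_block _ \<Rightarrow> [4, 7, 0, 13, 5, 6, 8] | B_block _ \<Rightarrow> [10, 9, 1, 12, 2, 11, 3]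
    | X_block \<Rightarrow> [1, 3, 0, 4, 5, 2, 6] | Inf_block \<Rightarrow> [0, 0, 0, 1, 3, 2, 4])"

definition inf_vertex :: "nat \<Rightarrow> nat" where
  "inf_vertex i = [2, 1, 4, 2, 1, 1, 4, 1] ! (i - 1)"

definition positions :: "nat \<Rightarrow> nat \<Rightarrow> block \<Rightarrow> nat \<Rightarrow> int" where
  "positions i = [positions_D1, positions_D2, positions_D3, positions_D4,
                  positions_D5, positions_D6, positions_D7, positions_D8] ! (i - 1)"

definition slots :: "nat \<Rightarrow> block \<Rightarrow> nat list" where
  "slots i = [slots_D1, slots_D2, slots_D3, slots_D4, slots_D5, slots_D6, slots_D7, slots_D8] ! (i - 1)"

lemma atLeast0_atMost_6: "{0..6::nat} = {0, 1, 2, 3, 4, 5, 6}"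
  by auto

lemma atLeastAtMost_1_8_cases:
  "i \<in> {1..8::nat} \<Longrightarrow> i = 1 \<or> i = 2 \<or> i = 3 \<or> i = 4 \<or> i = 5 \<or> i = 6 \<or> i = 7 \<or> i = 8"
  by auto

lemmas design_defs = positions_def slots_def inf_vertex_def
  positions_D1_def positions_D2_def positions_D3_def positions_D4_def
  positions_D5_def positions_D6_def positions_D7_def positions_D8_def
  slots_D1_def slots_D2_def slots_D3_def slots_D4_def
  slots_D5_def slots_D6_def slots_D7_def slots_D8_def

lemma D_pattern_distinct_length:
  "i \<in> {1..8} \<Longrightarrow> distinct (D_pattern i) \<and> length (D_pattern i) = 7"
  by (elim atLeastAtMost_1_8_cases[elim_format] disjE) (simp_all add: eval_nat_numeral)

lemma inf_vertex_degrees: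
  assumes "i \<in> {1..8}"
  shows "\<exists>!b. (inf_vertex i, b) \<in> set (D_pattern i)" "\<exists>!a. (a, inf_vertex i) \<in> set (D_pattern i)"
    "length (avoiding_arcs i (inf_vertex i)) = 5"
  using atLeastAtMost_1_8_cases[OF assms]
  by (elim disjE; simp add: inf_vertex_def avoiding_arcs_def eval_nat_numeral)+

lemma slots_valid:
  assumes "i \<in> {1..8}"
  shows "valid_slots i (inf_vertex i) (slots i)"
proof -
  note cases = atLeastAtMost_1_8_cases[OF assms]
  have "length (slots i \<beta>) = 7" for \<beta>
    using cases by (cases \<beta>) (auto simp: design_defs)
  moreover have "\<forall>k. distinct (slots i (A_block k) @ slots i (B_block k))
      \<and> set (slots i (A_block k) @ slots i (B_block k)) \<subseteq> {..<14}"
    "distinct (slots i X_block)" "set (slots i X_block) \<subseteq> {..<7}"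
    "distinct (map (\<lambda>e. slots i Inf_block ! cycle_edge e) (avoiding_arcs i (inf_vertex i)))"
    "set (map (\<lambda>e. slots i Inf_block ! cycle_edge e) (avoiding_arcs i (inf_vertex i))) \<subseteq> {..<5}"
    using cases
    by (elim disjE; simp add: design_defs avoiding_arcs_def cycle_edge_def eval_nat_numeral)+
  ultimately show ?thesis unfolding valid_slots_def by blast
qed

lemma positions_inj:
  assumes "i \<in> {1..8}" "\<beta> \<in> blocks T" "\<beta> \<noteq> Inf_block"
  shows "inj_on (\<lambda>j. positions i T \<beta> j mod (14 * int T + 13)) {0..6}"
proof -
  have "\<beta> = X_block \<or> (\<exists>k\<in>{1..T}. \<beta> = A_block k \<or> \<beta> = B_block k)"
    using assms(2,3) by (auto simp: blocks_def)
  then show ?thesis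
    unfolding atLeast0_atMost_6 using atLeastAtMost_1_8_cases[OF assms(1)]
    by (elim disjE bexE) (rule inj_on_mod_of_abs_diff_less, simp add: design_defs abs_less_iff)+
qed

lemma positions_inj_inf:
  assumes "i \<in> {1..8}"
  shows "inj_on (\<lambda>j. positions i T Inf_block j mod (14 * int T + 13)) ({0..6} - {inf_vertex i})"
  unfolding atLeast0_atMost_6 using atLeastAtMost_1_8_cases[OF assms(1)]
  by (elim disjE)
    (rule inj_on_mod_of_abs_diff_less, simp add: design_defs abs_less_iff insert_Diff_if)+

lemma positions_congruent:
  assumes "i \<in> {1..8}" "(\<beta>, a, b) \<in> finite_arcs i (blocks T) Inf_block (inf_vertex i)"
  shows "(positions i T \<beta> b - positions i T \<beta> a) mod (14 * int T + 13)
    = differences T (class_of \<beta>) ! (slots i \<beta> ! cycle_edge (a, b)) mod (14 * int T + 13)"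
proof -
  have "\<beta> = Inf_block \<and> a \<noteq> inf_vertex i \<and> b \<noteq> inf_vertex i \<or> \<beta> = X_block
      \<or> (\<exists>k\<in>{1..T}. \<beta> = A_block k \<or> \<beta> = B_block k)"
    and "(a, b) \<in> set (D_pattern i)"
    using assms(2) by (auto simp: finite_arcs_def avoiding_arcs_def blocks_def)
  then show ?thesis
    using atLeastAtMost_1_8_cases[OF assms(1)]
    by (elim disjE conjE bexE)
      (rule mod_eq_if_diff_multiple,
        fastforce simp: design_defs differences_def cycle_edge_def eval_nat_numeral)+
qed

lemma base_blocks:
  assumes "i \<in> {1..8}"
  shows "rotational_base_blocks i (14 * T + 13) (blocks T) Inf_block (inf_vertex i) (positions i T)"
  using inf_vertex_degrees[OF assms] D_pattern_distinct_length[OF assms]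
    positions_inj[OF assms] positions_inj_inf[OF assms] slots_valid[OF assms]
    positions_congruent[OF assms]
  by (intro rotational_base_blocks_of_tables[where slot = "slots i"]) auto

theorem lemma3p2:
  fixes i v :: nat
  assumes "i \<in> {1..8}" and "v > 0" and "v mod 14 = 0"
  shows "\<exists>\<D> :: (nat \<times> nat) set set. is_D_decomposition i {0..<v} \<D>"
proof -
  have "\<exists>T. v = Suc (14 * T + 13)" using assms(2,3) by presburger
  then obtain T where "v = Suc (14 * T + 13)" by blast
  then show ?thesis
    using rotational_base_blocks.development_decomposition[OF base_blocks[OF assms(1)]] by blast
qed

end
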